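(* Let $\mathcal{K}$ be a Hilbert space of dimension $D$ with a fixed orthonormal basis $\{|j\rangle\}_{j=1}^D$, let $\epsilon>0$, and let $U_1,\ldots,U_K$ be unitaries on $\mathcal{K}$ with $K \leq (10/\epsilon)^2 D\log(20D/\epsilon)$ such that $\frac{1-\epsilon}{D}\mathbb{1}\leq\frac{1}{K}\sum_{k}U_k\varphi U_k^*\leq\frac{1+\epsilon}{D}\mathbb{1}$ for every state $\varphi$ on $\mathcal{K}$. Consider the following protocol: Sender and Receiver share $|\Phi_D\rangle=\frac{1}{\sqrt D}\sum_{j=1}^D|j\rangle|j\rangle$; the Sender, given a description of a pure state $\psi=|\psi\rangle\langle\psi|$ on $\mathcal{K}$, measures on her half of $\Phi_D$ the POVM $$A_k=\frac{D}{K(1+\epsilon)}U_k\overline{\psi}U_k^*\ (k=1,\ldots,K),\qquad A_{\rm failure}=\mathbb{1}-\sum_{k=1}^K A_k,$$ and announces the outcome ("failure" or $k$); if the outcome is $k$, the Receiver applies $U_k^\top$ to his half of $\Phi_D$. Then for every pure state $|\psi\rangle\in\mathcal{K}$ this protocol realises remote state preparation exactly with probability of failure exactly $\frac{\epsilon}{1+\epsilon}\leq\epsilon$ (i.e. whenever the outcome is not "failure", the Receiver's state is exactly $\psi$). In particular, probabilistic exact remote state preparation of arbitrary pure states on $\mathcal{K}$ with error $\epsilon$ is possible using $$\log D+2\log\frac{10}{\epsilon}+\log\log\frac{20D}{\epsilon}\ \text{cbits}\quad\text{and}\quad \log D\ \text{ebits}.$$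
   Context: $\overline{\cdot}$ denotes complex conjugation and ${}^\top$ the transpose, both with respect to the basis $\{|j\rangle\}$; $\log$ is to base 2. A remote state preparation (r.s.p.) protocol: a Sender is given a classical description of a state from a set $\mathcal{X}$ of states on $\mathcal{K}$, and together with a Receiver uses resources (here: a shared maximally entangled state and forward classical communication) to produce a state $\widetilde\rho$ held by the Receiver. It is probabilistic exact with error $\epsilon$ if it additionally produces a flag, known to both parties, indicating "success" or "failure", such that for every input state $\rho\in\mathcal X$ the failure probability is at most $\epsilon$ and $\widetilde\rho=\rho$ whenever the flag is "success". Using $\log D$ ebits means using a maximally entangled state of Schmidt rank $D$; using $c$ cbits means the forward classical message takes at most $2^c$ values. *)

theory Defs
  imports "Jordan_Normal_Form.Matrix" "Jordan_Normal_Form.Conjugate" Complex_Main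
begin

text \<open>Finite-dimensional quantum mechanics on C^n with its standard basis,
  using Jordan_Normal_Form matrices.  Bipartite index (a,b) of C^n (x) C^m
  is encoded as a*m+b (first tensor factor = Sender).\<close>

definition mtrace :: "complex mat \<Rightarrow> complex" where
  "mtrace A = (\<Sum>i<dim_row A. A $$ (i,i))"

definition adj :: "complex mat \<Rightarrow> complex mat" where
  "adj A = mat (dim_col A) (dim_row A) (\<lambda>(i,j). cnj (A $$ (j,i)))"

definition conj_mat :: "complex mat \<Rightarrow> complex mat" where
  "conj_mat A = map_mat cnj A"

definition conj_vec :: "complex vec \<Rightarrow> complex vec" where
  "conj_vec v = map_vec cnj v"

definition unitary :: "nat \<Rightarrow> complex mat \<Rightarrow> bool" where
  "unitary n U \<longleftrightarrow> U \<in> carrier_mat n n \<and> U * adj U = 1\<^sub>m n \<and> adj U * U = 1\<^sub>m n"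

text \<open>positive semidefinite (complex order: 0 \<le> z iff z real and nonnegative)\<close>
definition psd :: "nat \<Rightarrow> complex mat \<Rightarrow> bool" where
  "psd n A \<longleftrightarrow> A \<in> carrier_mat n n \<and>
     (\<forall>v \<in> carrier_vec n. 0 \<le> scalar_prod (conj_vec v) (A *\<^sub>v v))"

definition loewner_le :: "nat \<Rightarrow> complex mat \<Rightarrow> complex mat \<Rightarrow> bool" where
  "loewner_le n A B \<longleftrightarrow> A \<in> carrier_mat n n \<and> B \<in> carrier_mat n n \<and> psd n (B - A)"

definition is_state :: "nat \<Rightarrow> complex mat \<Rightarrow> bool" where
  "is_state n \<rho> \<longleftrightarrow> psd n \<rho> \<and> mtrace \<rho> = 1"

definition ketbra :: "nat \<Rightarrow> complex vec \<Rightarrow> complex mat" where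
  "ketbra n v = mat n n (\<lambda>(i,j). v $ i * cnj (v $ j))"

definition tensor_mat :: "nat \<Rightarrow> nat \<Rightarrow> complex mat \<Rightarrow> complex mat \<Rightarrow> complex mat" where
  "tensor_mat n m A B = mat (n*m) (n*m)
     (\<lambda>(i,j). A $$ (i div m, j div m) * B $$ (i mod m, j mod m))"

definition ptrace1 :: "nat \<Rightarrow> nat \<Rightarrow> complex mat \<Rightarrow> complex mat" where
  "ptrace1 n m R = mat m m (\<lambda>(i,j). \<Sum>a<n. R $$ (a*m+i, a*m+j))"

definition max_ent :: "nat \<Rightarrow> complex vec" where
  "max_ent D = vec (D*D) (\<lambda>i. if i div D = i mod D then complex_of_real (1 / sqrt (real D)) else 0)"

definition twirl :: "nat \<Rightarrow> nat \<Rightarrow> (nat \<Rightarrow> complex mat) \<Rightarrow> complex mat \<Rightarrow> complex mat" where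
  "twirl D K U \<phi> = mat D D (\<lambda>ij. complex_of_real (1 / real K) *
      (\<Sum>k\<in>{1..K}. (U k * \<phi> * adj (U k)) $$ ij))"

definition povm_k :: "nat \<Rightarrow> nat \<Rightarrow> real \<Rightarrow> (nat \<Rightarrow> complex mat) \<Rightarrow> complex vec \<Rightarrow> nat \<Rightarrow> complex mat" where
  "povm_k D K \<epsilon> U \<psi> k = complex_of_real (real D / (real K * (1 + \<epsilon>)))
      \<cdot>\<^sub>m (U k * ketbra D (conj_vec \<psi>) * adj (U k))"

definition povm_fail :: "nat \<Rightarrow> nat \<Rightarrow> real \<Rightarrow> (nat \<Rightarrow> complex mat) \<Rightarrow> complex vec \<Rightarrow> complex mat" where
  "povm_fail D K \<epsilon> U \<psi> = mat D D (\<lambda>ij. (1\<^sub>m D) $$ ij - (\<Sum>k\<in>{1..K}. povm_k D K \<epsilon> U \<psi> k $$ ij))"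

text \<open>Unnormalised reduced state of the Receiver after the Sender obtains outcome
  with POVM element A on her half of Phi_D: Tr_S[(A (x) 1)|Phi_D><Phi_D|].
  Its trace is the probability of the outcome.\<close>
definition receiver_post :: "nat \<Rightarrow> complex mat \<Rightarrow> complex mat" where
  "receiver_post D A = ptrace1 D D (tensor_mat D D A (1\<^sub>m D) * ketbra (D*D) (max_ent D))"

end

theory Submission
  imports Defs
begin

text \<open>Measuring a POVM element A on the Sender's half of \<Phi>_D leaves the Receiver with the
  unnormalised state A^T / D. For A_k = c U_k \<psi>' \<psi>'^* U_k^*, where \<psi>' is the complex conjugate
  of \<psi> and c = D / (K (1 + \<epsilon>)), this is (c / D) conj(U_k) \<psi> \<psi>^* U_k^T, and U_k^T undoes
  conj(U_k) because U^T conj(U) = (U^* U)^T = 1. So every outcome k leaves exactly \<psi>, and it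
  occurs with probability c / D = 1 / (K (1 + \<epsilon>)). The failure element equals
  D / (1 + \<epsilon>) times (1 + \<epsilon>) / D - twirl(\<psi>' \<psi>'^*), which is positive by the upper twirl
  bound, and its probability is 1 - K c / D = \<epsilon> / (1 + \<epsilon>).\<close>

lemma adj_carrier_mat [simp]: "A \<in> carrier_mat n m \<Longrightarrow> adj A \<in> carrier_mat m n"
  unfolding adj_def by auto

lemma dim_adj [simp]: "dim_row (adj A) = dim_col A" "dim_col (adj A) = dim_row A"
  unfolding adj_def by auto

lemma index_adj [simp]: "i < dim_col A \<Longrightarrow> j < dim_row A \<Longrightarrow> adj A $$ (i, j) = cnj (A $$ (j, i))"
  unfolding adj_def by auto

lemma conj_mat_carrier_mat [simp]: "A \<in> carrier_mat n m \<Longrightarrow> conj_mat A \<in> carrier_mat n m"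
  unfolding conj_mat_def by auto

lemma conj_vec_carrier_vec [simp]: "v \<in> carrier_vec n \<Longrightarrow> conj_vec v \<in> carrier_vec n"
  unfolding conj_vec_def by simp

lemma transpose_adj: "transpose_mat (adj A) = conj_mat A"
  by (intro eq_matI) (auto simp: adj_def conj_mat_def)

lemma transpose_smult_mat: "transpose_mat (c \<cdot>\<^sub>m A) = c \<cdot>\<^sub>m transpose_mat A"
  by (intro eq_matI) auto

lemma smult_smult_mat: "a \<cdot>\<^sub>m (b \<cdot>\<^sub>m A) = (a * b) \<cdot>\<^sub>m (A :: 'a :: semigroup_mult mat)"
  by (intro eq_matI) (auto simp: mult.assoc)

lemma unitary_carrier_mat: "unitary n U \<Longrightarrow> U \<in> carrier_mat n n"
  unfolding unitary_def by simp

lemma transpose_mult_conj_unitary: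
  assumes "unitary n U"
  shows "transpose_mat U * conj_mat U = 1\<^sub>m n"
proof -
  have U: "U \<in> carrier_mat n n" and "adj U * U = 1\<^sub>m n"
    using assms unfolding unitary_def by auto
  then have "transpose_mat (adj U * U) = 1\<^sub>m n" by simp
  with U show ?thesis by (simp add: transpose_mult[of "adj U" n n U n] transpose_adj)
qed

lemma mult_sandwich_right_inverse:
  fixes P Q A :: "'a :: semiring_1 mat"
  assumes "P \<in> carrier_mat n n" "Q \<in> carrier_mat n n" "A \<in> carrier_mat n n" "P * Q = 1\<^sub>m n"
  shows "P * (Q * A * P) * Q = A"
proof -
  have "P * (Q * A * P) * Q = (P * Q) * A * (P * Q)"
    using assms(1-3) by (simp add: mult_carrier_mat [of _ n n] assoc_mult_mat [of _ n n _ n _ n])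
  also have "\<dots> = A"
    using assms(3,4) by simp
  finally show ?thesis .
qed

lemma mtrace_mult_commute:
  assumes "A \<in> carrier_mat n m" "B \<in> carrier_mat m n"
  shows "mtrace (A * B) = mtrace (B * A)"
proof -
  have "mtrace (A * B) = (\<Sum>i<n. \<Sum>j<m. A $$ (i, j) * B $$ (j, i))"
    using assms unfolding mtrace_def by (simp add: scalar_prod_def atLeast0LessThan)
  also have "\<dots> = (\<Sum>j<m. \<Sum>i<n. B $$ (j, i) * A $$ (i, j))"
    by (subst sum.swap) (simp add: mult.commute)
  also have "\<dots> = mtrace (B * A)"
    using assms unfolding mtrace_def by (simp add: scalar_prod_def atLeast0LessThan)
  finally show ?thesis .
qed

lemma mtrace_similar:
  assumes "A \<in> carrier_mat n n" "P \<in> carrier_mat n n" "Q \<in> carrier_mat n n" "Q * P = 1\<^sub>m n"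
  shows "mtrace (P * A * Q) = mtrace A"
proof -
  have "mtrace (P * A * Q) = mtrace (Q * (P * A))"
    using assms by (intro mtrace_mult_commute) auto
  also have "Q * (P * A) = A"
    using assms by (simp flip: assoc_mult_mat[of Q n n P n A n])
  finally show ?thesis .
qed

lemma mtrace_smult_mat: "A \<in> carrier_mat n n \<Longrightarrow> mtrace (c \<cdot>\<^sub>m A) = c * mtrace A"
  unfolding mtrace_def by (simp add: sum_distrib_left)

lemma mtrace_transpose_mat: "A \<in> carrier_mat n n \<Longrightarrow> mtrace (transpose_mat A) = mtrace A"
  unfolding mtrace_def by simp

lemma ketbra_carrier_mat [simp]: "ketbra n v \<in> carrier_mat n n"
  unfolding ketbra_def by simp

lemma dim_ketbra [simp]: "dim_row (ketbra n v) = n" "dim_col (ketbra n v) = n"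
  unfolding ketbra_def by simp_all

lemma mtrace_ketbra_conj_vec:
  "v \<in> carrier_vec n \<Longrightarrow> mtrace (ketbra n (conj_vec v)) = scalar_prod (conj_vec v) v"
  unfolding mtrace_def ketbra_def conj_vec_def scalar_prod_def
  by (auto simp: atLeast0LessThan intro: sum.cong)

lemma transpose_ketbra_conj_vec:
  "v \<in> carrier_vec n \<Longrightarrow> transpose_mat (ketbra n (conj_vec v)) = ketbra n v"
  by (intro eq_matI) (auto simp: ketbra_def conj_vec_def)

lemma psd_ketbra:
  assumes x: "x \<in> carrier_vec n"
  shows "psd n (ketbra n x)"
  unfolding psd_def
proof (intro conjI ballI)
  fix v :: "complex vec" assume v: "v \<in> carrier_vec n"
  define z where "z = (\<Sum>j<n. cnj (x $ j) * v $ j)"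
  have "scalar_prod (conj_vec v) (ketbra n x *\<^sub>v v) = (\<Sum>i<n. cnj (v $ i) * (\<Sum>j<n. x $ i * cnj (x $ j) * v $ j))"
    using x v unfolding conj_vec_def ketbra_def
    by (simp add: scalar_prod_def mult_mat_vec_def atLeast0LessThan)
  also have "\<dots> = cnj z * z"
    unfolding z_def by (simp add: sum_distrib_left sum_distrib_right ac_simps)
  also have "\<dots> = complex_of_real ((Re z)\<^sup>2 + (Im z)\<^sup>2)"
    by (simp add: complex_mult_cnj mult.commute)
  finally show "0 \<le> scalar_prod (conj_vec v) (ketbra n x *\<^sub>v v)"
    by (simp add: less_eq_complex_def)
qed simp

lemma psd_smult_mat:
  assumes "psd n A" "0 \<le> r"
  shows "psd n (complex_of_real r \<cdot>\<^sub>m A)"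
  unfolding psd_def
proof (intro conjI ballI)
  have A: "A \<in> carrier_mat n n" using assms unfolding psd_def by simp
  then show "complex_of_real r \<cdot>\<^sub>m A \<in> carrier_mat n n" by simp
  fix v :: "complex vec" assume v: "v \<in> carrier_vec n"
  have "scalar_prod (conj_vec v) ((complex_of_real r \<cdot>\<^sub>m A) *\<^sub>v v)
      = complex_of_real r * scalar_prod (conj_vec v) (A *\<^sub>v v)"
    using A v unfolding conj_vec_def by (simp add: mult_mat_vec_def scalar_prod_def sum_distrib_left ac_simps)
  also have "0 \<le> \<dots>"
    using assms v unfolding psd_def by (intro mult_nonneg_nonneg) (auto simp: less_eq_complex_def)
  finally show "0 \<le> scalar_prod (conj_vec v) ((complex_of_real r \<cdot>\<^sub>m A) *\<^sub>v v)" .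
qed

lemma mult_ketbra:
  assumes "M \<in> carrier_mat m n" "v \<in> carrier_vec n"
  shows "M * ketbra n v = mat m n (\<lambda>(i, j). (M *\<^sub>v v) $ i * cnj (v $ j))"
  using assms unfolding ketbra_def
  by (intro eq_matI) (auto simp: scalar_prod_def sum_distrib_left ac_simps)

lemma mult_ketbra_mult_adj:
  assumes U: "U \<in> carrier_mat n n" and x: "x \<in> carrier_vec n"
  shows "U * ketbra n x * adj U = ketbra n (U *\<^sub>v x)"
proof (rule eq_matI)
  fix i j assume "i < dim_row (ketbra n (U *\<^sub>v x))" "j < dim_col (ketbra n (U *\<^sub>v x))"
  then have i: "i < n" and j: "j < n" unfolding ketbra_def by auto
  have "(U * ketbra n x * adj U) $$ (i, j) = (\<Sum>l<n. (U *\<^sub>v x) $ i * cnj (x $ l) * cnj (U $$ (j, l)))"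
    using U x i j by (simp add: mult_ketbra scalar_prod_def atLeast0LessThan)
  also have "\<dots> = (U *\<^sub>v x) $ i * cnj ((U *\<^sub>v x) $ j)"
    using U x j by (simp add: scalar_prod_def atLeast0LessThan sum_distrib_left ac_simps)
  finally show "(U * ketbra n x * adj U) $$ (i, j) = ketbra n (U *\<^sub>v x) $$ (i, j)"
    using i j by (simp add: ketbra_def)
qed (use U in \<open>auto simp: ketbra_def\<close>)

lemma transpose_mult_ketbra_conj_vec_mult_adj:
  assumes "U \<in> carrier_mat n n" "v \<in> carrier_vec n"
  shows "transpose_mat (U * ketbra n (conj_vec v) * adj U) = conj_mat U * ketbra n v * transpose_mat U"
proof -
  have "transpose_mat (U * ketbra n (conj_vec v) * adj U)
      = conj_mat U * (ketbra n v * transpose_mat U)"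
    using assms by (simp add: transpose_mult[of _ n n _ n] transpose_adj transpose_ketbra_conj_vec)
  with assms show ?thesis by (simp add: assoc_mult_mat[of _ n n _ n _ n])
qed

lemma mult_add_less_mult:
  assumes "a < n" "b < (m :: nat)"
  shows "a * m + b < n * m"
proof -
  have "a * m + b < Suc a * m" using assms(2) by simp
  also have "\<dots> \<le> n * m" using assms(1) by (intro mult_le_mono1) simp
  finally show ?thesis .
qed

lemma tensor_mat_carrier_mat: "tensor_mat n m A B \<in> carrier_mat (n * m) (n * m)"
  unfolding tensor_mat_def by simp

lemma max_ent_carrier: "max_ent D \<in> carrier_vec (D * D)"
  unfolding max_ent_def by simp

lemma index_max_ent:
  "x < D * D \<Longrightarrow> max_ent D $ x = (if x div D = x mod D then complex_of_real (1 / sqrt (real D)) else 0)"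
  unfolding max_ent_def by simp

lemma tensor_one_mult_max_ent:
  assumes x: "x < D * D"
  shows "(tensor_mat D D A (1\<^sub>m D) *\<^sub>v max_ent D) $ x
    = complex_of_real (1 / sqrt (real D)) * A $$ (x div D, x mod D)"
proof -
  \<comment> \<open>index of the unique basis term |x mod D>|x mod D> of \<Phi>_D matched by 1 on the second factor\<close>
  define t where "t = x mod D * D + x mod D"
  have D: "0 < D" using x by (cases D) auto
  have t: "t < D * D" unfolding t_def using D by (intro mult_add_less_mult) auto
  have "(tensor_mat D D A (1\<^sub>m D) *\<^sub>v max_ent D) $ x
      = (\<Sum>l<D * D. A $$ (x div D, l div D) * 1\<^sub>m D $$ (x mod D, l mod D) * max_ent D $ l)"
    using x unfolding tensor_mat_def max_ent_def by (simp add: scalar_prod_def atLeast0LessThan)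
  also have "\<dots> = (\<Sum>l<D * D. if l = t
      then complex_of_real (1 / sqrt (real D)) * A $$ (x div D, x mod D) else 0)"
  proof (rule sum.cong [OF refl])
    fix l assume l: "l \<in> {..<D * D}"
    have "l = t \<longleftrightarrow> l div D = x mod D \<and> l mod D = x mod D"
      using D by (auto simp: t_def) (metis div_mult_mod_eq)
    then show "A $$ (x div D, l div D) * 1\<^sub>m D $$ (x mod D, l mod D) * max_ent D $ l
        = (if l = t then complex_of_real (1 / sqrt (real D)) * A $$ (x div D, x mod D) else 0)"
      using l D by (auto simp: index_max_ent)
  qed
  also have "\<dots> = complex_of_real (1 / sqrt (real D)) * A $$ (x div D, x mod D)"
    using t by simp
  finally show ?thesis .
qed

lemma receiver_post_eq_transpose:
  assumes A: "A \<in> carrier_mat D D"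
  shows "receiver_post D A = complex_of_real (1 / real D) \<cdot>\<^sub>m transpose_mat A"
proof (rule eq_matI)
  fix i j assume "i < dim_row (complex_of_real (1 / real D) \<cdot>\<^sub>m transpose_mat A)"
    "j < dim_col (complex_of_real (1 / real D) \<cdot>\<^sub>m transpose_mat A)"
  then have i: "i < D" and j: "j < D" using A by auto
  define w where "w = tensor_mat D D A (1\<^sub>m D) *\<^sub>v max_ent D"
  have "tensor_mat D D A (1\<^sub>m D) * ketbra (D * D) (max_ent D)
      = mat (D * D) (D * D) (\<lambda>(x, y). w $ x * cnj (max_ent D $ y))"
    unfolding w_def by (rule mult_ketbra [OF tensor_mat_carrier_mat max_ent_carrier])
  then have "receiver_post D A $$ (i, j) = (\<Sum>a<D. w $ (a * D + i) * cnj (max_ent D $ (a * D + j)))"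
    using i j unfolding receiver_post_def ptrace1_def by (auto intro: sum.cong simp: mult_add_less_mult)
  also have "\<dots> = (\<Sum>a<D. if a = j then complex_of_real (1 / real D) * A $$ (j, i) else 0)"
  proof (rule sum.cong [OF refl])
    fix a assume a: "a \<in> {..<D}"
    have "complex_of_real (1 / sqrt (real D)) * cnj (complex_of_real (1 / sqrt (real D)))
        = complex_of_real (1 / real D)"
      by (simp flip: of_real_mult)
    then show "w $ (a * D + i) * cnj (max_ent D $ (a * D + j))
        = (if a = j then complex_of_real (1 / real D) * A $$ (j, i) else 0)"
      using a i j unfolding w_def
      by (simp add: tensor_one_mult_max_ent index_max_ent mult_add_less_mult)
  qed
  also have "\<dots> = (complex_of_real (1 / real D) \<cdot>\<^sub>m transpose_mat A) $$ (i, j)"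
    using i j A by simp
  finally show "receiver_post D A $$ (i, j) = (complex_of_real (1 / real D) \<cdot>\<^sub>m transpose_mat A) $$ (i, j)" .
qed (use A in \<open>simp_all add: receiver_post_def ptrace1_def\<close>)

lemma mtrace_receiver_post:
  "A \<in> carrier_mat D D \<Longrightarrow> mtrace (receiver_post D A) = mtrace A / of_nat D"
  by (simp add: receiver_post_eq_transpose mtrace_smult_mat [of _ D] mtrace_transpose_mat)

lemma povm_k_eq_ketbra:
  assumes "U k \<in> carrier_mat D D" "\<psi> \<in> carrier_vec D"
  shows "povm_k D K \<epsilon> U \<psi> k
    = complex_of_real (real D / (real K * (1 + \<epsilon>))) \<cdot>\<^sub>m ketbra D (U k *\<^sub>v conj_vec \<psi>)"
  using assms unfolding povm_k_def by (simp add: mult_ketbra_mult_adj)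

lemma psd_povm_k:
  assumes "U k \<in> carrier_mat D D" "\<psi> \<in> carrier_vec D" "0 \<le> 1 + \<epsilon>"
  shows "psd D (povm_k D K \<epsilon> U \<psi> k)"
  unfolding povm_k_eq_ketbra [where U = U and k = k, OF assms(1,2)]
  using assms by (intro psd_smult_mat psd_ketbra) auto

lemma mtrace_povm_k:
  assumes "unitary D (U k)" "\<psi> \<in> carrier_vec D"
  shows "mtrace (povm_k D K \<epsilon> U \<psi> k)
    = complex_of_real (real D / (real K * (1 + \<epsilon>))) * scalar_prod (conj_vec \<psi>) \<psi>"
proof -
  have U: "U k \<in> carrier_mat D D" "adj (U k) * U k = 1\<^sub>m D"
    using assms(1) unfolding unitary_def by auto
  then have X: "U k * ketbra D (conj_vec \<psi>) * adj (U k) \<in> carrier_mat D D"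
    by (intro mult_carrier_mat) auto
  have "mtrace (U k * ketbra D (conj_vec \<psi>) * adj (U k)) = mtrace (ketbra D (conj_vec \<psi>))"
    using U by (intro mtrace_similar) auto
  then show ?thesis
    unfolding povm_k_def mtrace_smult_mat [OF X] mtrace_ketbra_conj_vec [OF assms(2)] by (simp only:)
qed

lemma mtrace_receiver_post_povm_k:
  assumes "unitary D (U k)" "\<psi> \<in> carrier_vec D" "scalar_prod (conj_vec \<psi>) \<psi> = 1" "0 < D"
  shows "mtrace (receiver_post D (povm_k D K \<epsilon> U \<psi> k)) = complex_of_real (1 / (real K * (1 + \<epsilon>)))"
proof -
  have P: "povm_k D K \<epsilon> U \<psi> k \<in> carrier_mat D D"
    using assms by (simp add: povm_k_eq_ketbra unitary_carrier_mat)
  have "mtrace (receiver_post D (povm_k D K \<epsilon> U \<psi> k))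
      = complex_of_real (real D / (real K * (1 + \<epsilon>))) / complex_of_real (real D)"
    unfolding mtrace_receiver_post [OF P] mtrace_povm_k [where U = U and k = k, OF assms(1,2)] assms(3)
    by simp
  also have "\<dots> = complex_of_real (real D / (real K * (1 + \<epsilon>)) / real D)"
    by (simp only: of_real_divide)
  also have "real D / (real K * (1 + \<epsilon>)) / real D = 1 / (real K * (1 + \<epsilon>))"
    using assms(4) by simp
  finally show ?thesis .
qed

lemma unitary_correction_receiver_post_povm_k:
  assumes u: "unitary D (U k)" and \<psi>: "\<psi> \<in> carrier_vec D" and D: "0 < D"
  shows "transpose_mat (U k) * receiver_post D (povm_k D K \<epsilon> U \<psi> k) * conj_mat (U k)
    = complex_of_real (1 / (real K * (1 + \<epsilon>))) \<cdot>\<^sub>m ketbra D \<psi>"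
proof -
  define c where "c = complex_of_real (1 / (real K * (1 + \<epsilon>)))"
  define T where "T = transpose_mat (U k)"
  define C where "C = conj_mat (U k)"
  define X where "X = U k * ketbra D (conj_vec \<psi>) * adj (U k)"
  have U: "U k \<in> carrier_mat D D" using u by (rule unitary_carrier_mat)
  then have T: "T \<in> carrier_mat D D" and C: "C \<in> carrier_mat D D" unfolding T_def C_def by auto
  have X: "X \<in> carrier_mat D D" unfolding X_def using U by (intro mult_carrier_mat) auto
  have M: "C * ketbra D \<psi> * T \<in> carrier_mat D D" using C T by (intro mult_carrier_mat) auto
  have "1 / real D * (real D / (real K * (1 + \<epsilon>))) = 1 / (real K * (1 + \<epsilon>))"
    using D by simp
  then have c: "complex_of_real (1 / real D) * complex_of_real (real D / (real K * (1 + \<epsilon>))) = c"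
    unfolding c_def of_real_mult [symmetric] by (rule arg_cong)
  have "povm_k D K \<epsilon> U \<psi> k = complex_of_real (real D / (real K * (1 + \<epsilon>))) \<cdot>\<^sub>m X"
    unfolding povm_k_def X_def ..
  then have "receiver_post D (povm_k D K \<epsilon> U \<psi> k)
      = complex_of_real (1 / real D) \<cdot>\<^sub>m (complex_of_real (real D / (real K * (1 + \<epsilon>))) \<cdot>\<^sub>m transpose_mat X)"
    using receiver_post_eq_transpose [OF smult_carrier_mat [OF X]] by (simp only: transpose_smult_mat)
  also have "\<dots> = c \<cdot>\<^sub>m transpose_mat X"
    unfolding smult_smult_mat c ..
  also have "transpose_mat X = C * ketbra D \<psi> * T"
    unfolding X_def T_def C_def by (rule transpose_mult_ketbra_conj_vec_mult_adj [OF U \<psi>])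
  finally have "T * receiver_post D (povm_k D K \<epsilon> U \<psi> k) * C = c \<cdot>\<^sub>m (T * (C * ketbra D \<psi> * T) * C)"
    using mult_smult_distrib [OF T M] mult_smult_assoc_mat [OF mult_carrier_mat [OF T M] C]
    by (simp only:)
  also have "T * (C * ketbra D \<psi> * T) * C = ketbra D \<psi>"
    using T C transpose_mult_conj_unitary [OF u] unfolding T_def C_def
    by (intro mult_sandwich_right_inverse) auto
  finally show ?thesis unfolding T_def C_def c_def .
qed

lemma index_povm_k:
  "U k \<in> carrier_mat D D \<Longrightarrow> i < D \<Longrightarrow> j < D \<Longrightarrow> povm_k D K \<epsilon> U \<psi> k $$ (i, j)
    = complex_of_real (real D / (real K * (1 + \<epsilon>))) * (U k * ketbra D (conj_vec \<psi>) * adj (U k)) $$ (i, j)"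
  unfolding povm_k_def by simp

lemma povm_fail_eq_twirl:
  assumes U: "\<forall>k\<in>{1..K}. U k \<in> carrier_mat D D" and D: "0 < D" and \<epsilon>: "1 + \<epsilon> \<noteq> 0"
  shows "povm_fail D K \<epsilon> U \<psi> = complex_of_real (real D / (1 + \<epsilon>)) \<cdot>\<^sub>m
    (complex_of_real ((1 + \<epsilon>) / real D) \<cdot>\<^sub>m 1\<^sub>m D - twirl D K U (ketbra D (conj_vec \<psi>)))"
proof (rule eq_matI)
  fix i j assume "i < dim_row (complex_of_real (real D / (1 + \<epsilon>)) \<cdot>\<^sub>m
    (complex_of_real ((1 + \<epsilon>) / real D) \<cdot>\<^sub>m 1\<^sub>m D - twirl D K U (ketbra D (conj_vec \<psi>))))"
    "j < dim_col (complex_of_real (real D / (1 + \<epsilon>)) \<cdot>\<^sub>m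
    (complex_of_real ((1 + \<epsilon>) / real D) \<cdot>\<^sub>m 1\<^sub>m D - twirl D K U (ketbra D (conj_vec \<psi>))))"
  then have i: "i < D" and j: "j < D" by (auto simp: twirl_def)
  define S where "S = (\<Sum>k\<in>{1..K}. (U k * ketbra D (conj_vec \<psi>) * adj (U k)) $$ (i, j))"
  define a where "a = complex_of_real (real D / (1 + \<epsilon>))"
  define b where "b = complex_of_real ((1 + \<epsilon>) / real D)"
  define r where "r = complex_of_real (1 / real K)"
  define c where "c = complex_of_real (real D / (real K * (1 + \<epsilon>)))"
  have "real D / (1 + \<epsilon>) * ((1 + \<epsilon>) / real D) = 1" using D \<epsilon> by simp
  then have ab: "a * b = 1" unfolding a_def b_def of_real_mult [symmetric] by simp
  have "real D / (1 + \<epsilon>) * (1 / real K) = real D / (real K * (1 + \<epsilon>))" by (simp add: field_simps)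
  then have ar: "a * r = c" unfolding a_def r_def c_def of_real_mult [symmetric] by (rule arg_cong)
  have "(\<Sum>k\<in>{1..K}. povm_k D K \<epsilon> U \<psi> k $$ (i, j)) = c * S"
    using U i j unfolding S_def c_def sum_distrib_left by (intro sum.cong) (auto simp: index_povm_k)
  then have "povm_fail D K \<epsilon> U \<psi> $$ (i, j) = 1\<^sub>m D $$ (i, j) - c * S"
    using i j unfolding povm_fail_def by simp
  also have "\<dots> = (a * b) * 1\<^sub>m D $$ (i, j) - (a * r) * S"
    unfolding ab ar by simp
  also have "\<dots> = a * (b * 1\<^sub>m D $$ (i, j) - r * S)"
    by (simp add: algebra_simps)
  finally show "povm_fail D K \<epsilon> U \<psi> $$ (i, j) = (complex_of_real (real D / (1 + \<epsilon>)) \<cdot>\<^sub>m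
    (complex_of_real ((1 + \<epsilon>) / real D) \<cdot>\<^sub>m 1\<^sub>m D - twirl D K U (ketbra D (conj_vec \<psi>)))) $$ (i, j)"
    using i j unfolding twirl_def S_def a_def b_def r_def by simp
qed (simp_all add: povm_fail_def twirl_def)

lemma psd_povm_fail:
  assumes "\<forall>k\<in>{1..K}. U k \<in> carrier_mat D D" "0 < D" "0 < 1 + \<epsilon>"
    and "loewner_le D (twirl D K U (ketbra D (conj_vec \<psi>)))
      (complex_of_real ((1 + \<epsilon>) / real D) \<cdot>\<^sub>m 1\<^sub>m D)"
  shows "psd D (povm_fail D K \<epsilon> U \<psi>)"
proof -
  have \<epsilon>: "1 + \<epsilon> \<noteq> 0" using assms(3) by simp
  show ?thesis
    unfolding povm_fail_eq_twirl [OF assms(1,2) \<epsilon>]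
    using assms by (intro psd_smult_mat) (auto simp: loewner_le_def)
qed

lemma mtrace_receiver_post_povm_fail:
  assumes U: "\<forall>k\<in>{1..K}. unitary D (U k)" and \<psi>: "\<psi> \<in> carrier_vec D"
    and normalized: "scalar_prod (conj_vec \<psi>) \<psi> = 1"
    and D: "0 < D" and K: "0 < K" and \<epsilon>: "1 + \<epsilon> \<noteq> 0"
  shows "mtrace (receiver_post D (povm_fail D K \<epsilon> U \<psi>)) = complex_of_real (\<epsilon> / (1 + \<epsilon>))"
proof -
  have dim: "dim_row (povm_k D K \<epsilon> U \<psi> k) = D" if "k \<in> {1..K}" for k
    using U that \<psi> by (simp add: povm_k_eq_ketbra unitary_carrier_mat)
  have "mtrace (povm_fail D K \<epsilon> U \<psi>) = of_nat D - (\<Sum>k\<in>{1..K}. mtrace (povm_k D K \<epsilon> U \<psi> k))"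
    unfolding povm_fail_def mtrace_def
    by (simp add: sum_subtractf, subst sum.swap) (simp add: dim)
  also have "\<dots> = of_nat D - of_nat K * complex_of_real (real D / (real K * (1 + \<epsilon>)))"
    using U \<psi> normalized by (simp add: mtrace_povm_k)
  also have "\<dots> = complex_of_real (real D - real K * (real D / (real K * (1 + \<epsilon>))))"
    by simp
  also have "real K * (real D / (real K * (1 + \<epsilon>))) = real D / (1 + \<epsilon>)"
    using K by simp
  also have "real D - real D / (1 + \<epsilon>) = real D * (\<epsilon> / (1 + \<epsilon>))"
    using \<epsilon> by (simp add: field_simps)
  finally show ?thesis
    using D by (simp add: mtrace_receiver_post povm_fail_def)
qed

lemma log_le_of_le_sq_mult:
  fixes b x a d l :: real
  assumes "1 < b" "0 < x" "0 < a" "0 < d" "x \<le> a\<^sup>2 * d * l"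
  shows "log b x \<le> log b d + 2 * log b a + log b l"
proof -
  have "0 < a\<^sup>2 * d" using assms by simp
  moreover from this have "0 < l" using assms by (smt (verit) zero_less_mult_iff)
  ultimately have "log b x \<le> log b (a\<^sup>2 * d * l)" using assms by simp
  also have "\<dots> = log b d + 2 * log b a + log b l"
    using assms \<open>0 < l\<close> by (simp add: log_mult log_nat_power)
  finally show ?thesis .
qed

theorem theorem5:
  fixes D K :: nat and \<epsilon> :: real and U :: "nat \<Rightarrow> complex mat"
  assumes D: "D \<ge> 1" and eps: "\<epsilon> > 0" and K: "K \<ge> 1"
    and Kbound: "real K \<le> (10 / \<epsilon>)^2 * real D * log 2 (20 * real D / \<epsilon>)"
    and unit: "\<forall>k\<in>{1..K}. unitary D (U k)"
    and twirl: "\<forall>\<phi>. is_state D \<phi> \<longrightarrow>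
        loewner_le D (complex_of_real ((1 - \<epsilon>) / real D) \<cdot>\<^sub>m 1\<^sub>m D) (twirl D K U \<phi>) \<and>
        loewner_le D (twirl D K U \<phi>) (complex_of_real ((1 + \<epsilon>) / real D) \<cdot>\<^sub>m 1\<^sub>m D)"
  shows "\<forall>\<psi> \<in> carrier_vec D. scalar_prod (conj_vec \<psi>) \<psi> = 1 \<longrightarrow>
      (\<forall>k\<in>{1..K}. psd D (povm_k D K \<epsilon> U \<psi> k)) \<and>
      psd D (povm_fail D K \<epsilon> U \<psi>) \<and>
      (\<forall>k\<in>{1..K}.
         transpose_mat (U k) * receiver_post D (povm_k D K \<epsilon> U \<psi> k) * conj_mat (U k)
         = mtrace (receiver_post D (povm_k D K \<epsilon> U \<psi> k)) \<cdot>\<^sub>m ketbra D \<psi>) \<and>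
      mtrace (receiver_post D (povm_fail D K \<epsilon> U \<psi>)) = complex_of_real (\<epsilon> / (1 + \<epsilon>)) \<and>
      \<epsilon> / (1 + \<epsilon>) \<le> \<epsilon> \<and>
      log 2 (real K) \<le> log 2 (real D) + 2 * log 2 (10 / \<epsilon>) + log 2 (log 2 (20 * real D / \<epsilon>))"
proof -
  have carrier: "\<forall>k\<in>{1..K}. U k \<in> carrier_mat D D"
    using unit by (simp add: unitary_carrier_mat)
  have upper: "loewner_le D (twirl D K U (ketbra D (conj_vec \<psi>)))
      (complex_of_real ((1 + \<epsilon>) / real D) \<cdot>\<^sub>m 1\<^sub>m D)"
    if "\<psi> \<in> carrier_vec D" "scalar_prod (conj_vec \<psi>) \<psi> = 1" for \<psi>
  proof -
    have "is_state D (ketbra D (conj_vec \<psi>))"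
      using that by (simp add: is_state_def psd_ketbra mtrace_ketbra_conj_vec)
    with twirl show ?thesis by blast
  qed
  have "log 2 (real K) \<le> log 2 (real D) + 2 * log 2 (10 / \<epsilon>) + log 2 (log 2 (20 * real D / \<epsilon>))"
    using Kbound K D eps by (intro log_le_of_le_sq_mult) auto
  moreover have "\<epsilon> / (1 + \<epsilon>) \<le> \<epsilon>"
    using eps by (simp add: field_simps)
  ultimately show ?thesis
    using carrier unit D K eps
    by (auto intro: psd_povm_fail upper
        simp: psd_povm_k unitary_correction_receiver_post_povm_k mtrace_receiver_post_povm_k
          mtrace_receiver_post_povm_fail)
qed

end
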